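(* Let $\sigma>0$ and define $S_\sigma f(x)=\int_{\{y\in\mathbb{R}^d:(x,y)\in L_\sigma\}}\frac{1+|x|}{|x-y|^{d-1}}f(y)\,dy$, $x\in\mathbb{R}^d$. Then $S_\sigma$ is bounded from $L^p(\mathbb{R}^d,dx)$ into itself and from $L^p(\mathbb{R}^d,\gamma_{\infty,1})$ into itself, for every $1\le p\le\infty$.
   Context: $d\ge 1$. $d\gamma_{\infty,1}(x)=\pi^{-d/2}e^{-|x|^2}dx$. For $\sigma>0$, $L_\sigma=\{(x,y)\in\mathbb{R}^d\times\mathbb{R}^d:\ |x-y|\le\sigma\min\{1,|x+y|^{-1}\}\}$ (the $\sigma$-local region). *)

theory Defs
  imports "HOL-Analysis.Analysis"
begin

definition gauss_measure :: "'a::euclidean_space measure" where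
  "gauss_measure = density lborel
     (\<lambda>x. ennreal (pi powr (- real DIM('a) / 2) * exp (- (norm x)\<^sup>2)))"

text \<open>The sigma-local region: |x-y| <= sigma * min{1, |x+y|^(-1)},
  where |x+y|^(-1) = +infinity when x+y = 0.\<close>
definition local_region :: "real \<Rightarrow> ('a::euclidean_space \<times> 'a) set" where
  "local_region \<sigma> = {(x, y). norm (x - y) \<le> \<sigma> \<and> norm (x - y) * norm (x + y) \<le> \<sigma>}"

definition S_kernel :: "real \<Rightarrow> 'a::euclidean_space \<Rightarrow> 'a \<Rightarrow> real" where
  "S_kernel \<sigma> x y = indicator (local_region \<sigma>) (x, y) *
      ((1 + norm x) / norm (x - y) ^ (DIM('a) - 1))"

definition S_op :: "real \<Rightarrow> ('a::euclidean_space \<Rightarrow> real) \<Rightarrow> 'a \<Rightarrow> real" where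
  "S_op \<sigma> f x = (\<integral>y. S_kernel \<sigma> x y * f y \<partial>lborel)"

definition S_bounded_Lp :: "'a::euclidean_space measure \<Rightarrow> real \<Rightarrow> real \<Rightarrow> bool" where
  "S_bounded_Lp M p \<sigma> \<longleftrightarrow> (\<exists>C\<ge>0. \<forall>f \<in> borel_measurable M.
     (\<integral>\<^sup>+ x. ennreal (\<bar>f x\<bar> powr p) \<partial>M) < \<infinity> \<longrightarrow>
       (AE x in M. integrable lborel (\<lambda>y. S_kernel \<sigma> x y * f y)) \<and>
       S_op \<sigma> f \<in> borel_measurable M \<and>
       (\<integral>\<^sup>+ x. ennreal (\<bar>S_op \<sigma> f x\<bar> powr p) \<partial>M)
          \<le> ennreal C * (\<integral>\<^sup>+ x. ennreal (\<bar>f x\<bar> powr p) \<partial>M))"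

definition S_bounded_Linf :: "'a::euclidean_space measure \<Rightarrow> real \<Rightarrow> bool" where
  "S_bounded_Linf M \<sigma> \<longleftrightarrow> (\<exists>C\<ge>0. \<forall>f \<in> borel_measurable M. \<forall>B.
     (AE x in M. \<bar>f x\<bar> \<le> B) \<longrightarrow>
       (AE x in M. integrable lborel (\<lambda>y. S_kernel \<sigma> x y * f y)) \<and>
       S_op \<sigma> f \<in> borel_measurable M \<and>
       (AE x in M. \<bar>S_op \<sigma> f x\<bar> \<le> C * B))"

end

theory Submission
  imports Defs
begin

(*
  On the local region, |x - y| <= sigma, and |x - y| <= sigma / |x| once |x| > sigma (then
  |x + y| >= |x|). Integrating |x - y|^(1-d) over a ball of radius rho costs O(rho) (dyadic
  shells), which compensates the factor 1 + |x|: the rows of the kernel have uniformly bounded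
  integrals. Up to the factor 1 + sigma the kernel is symmetric, so its columns are bounded as
  well, and Schur's test gives boundedness on every L^p(dx). On the local region
  |y|^2 - |x|^2 = <y - x, y + x> <= sigma, so the Gaussian density changes at most by the
  factor e^sigma; hence the column bound survives the Gaussian weight and Schur's test applies
  to L^p(gamma) as well. The L^infinity bounds only need the row bound.
*)

section \<open>Schur's test\<close>

text \<open>Integrated against a kernel k, this yields Hoelder's inequality for the finite measure k dN.\<close>
lemma le_powr_young_weighted:
  fixes t A J p :: real
  assumes "1 \<le> p" "0 < A" "0 < J" "0 \<le> t"
  shows "t \<le> A powr (1 - 1 / p) * J powr (1 / p) * (t powr p / (p * J) + (1 - 1 / p) / A)"
proof (cases "t = 0")
  case False
  with assms have t: "t > 0" by simp
  have "(t powr p / J) powr (1 / p) * (1 / A) powr (1 - 1 / p) \<le> 1 / p * (t powr p / J) + (1 - 1 / p) * (1 / A)"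
    using assms t by (intro Youngs_inequality_0) auto
  moreover have "(t powr p / J) powr (1 / p) = t / J powr (1 / p)"
    using assms t by (simp add: powr_divide powr_powr)
  moreover have "(1 / A) powr (1 - 1 / p) = 1 / A powr (1 - 1 / p)"
    using assms by (simp add: powr_divide)
  ultimately have "t / (A powr (1 - 1 / p) * J powr (1 / p)) \<le> t powr p / (p * J) + (1 - 1 / p) / A"
    by (simp add: field_simps)
  then show ?thesis
    using assms by (simp add: pos_divide_le_eq mult.commute)
qed (use assms in \<open>auto intro!: mult_nonneg_nonneg add_nonneg_nonneg\<close>)

lemma nn_integral_mult_le_powr:
  fixes k g :: "'b \<Rightarrow> real"
  assumes [measurable]: "k \<in> borel_measurable N" "g \<in> borel_measurable N"
    and nonneg: "\<And>x. 0 \<le> k x" "\<And>x. 0 \<le> g x"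
    and p: "1 \<le> p" and A: "0 < A" "(\<integral>\<^sup>+ x. k x \<partial>N) \<le> ennreal A"
    and J: "(\<integral>\<^sup>+ x. k x * g x powr p \<partial>N) \<le> ennreal J" "0 \<le> J"
  shows "(\<integral>\<^sup>+ x. k x * g x \<partial>N) \<le> ennreal (A powr (1 - 1 / p) * J powr (1 / p))"
proof (cases "J = 0")
  case True
  have "AE x in N. ennreal (k x * g x powr p) = 0"
    using J True by (simp add: nn_integral_0_iff_AE)
  then have "AE x in N. ennreal (k x * g x) = 0"
  proof eventually_elim
    fix x
    assume "ennreal (k x * g x powr p) = 0"
    moreover have "0 \<le> k x * g x powr p"
      using nonneg(1)[of x] by simp
    ultimately have "k x * g x powr p = 0"
      by (simp add: ennreal_eq_0_iff)
    then show "ennreal (k x * g x) = 0"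
      by auto
  qed
  then have "(\<integral>\<^sup>+ x. k x * g x \<partial>N) = 0"
    by (simp add: nn_integral_0_iff_AE)
  then show ?thesis by simp
next
  case False
  with J have "0 < J" by simp
  define c where "c = A powr (1 - 1 / p) * J powr (1 / p)"
  define a b where "a = c / (p * J)" and "b = c * (1 - 1 / p) / A"
  have "0 \<le> a" "0 \<le> b"
    using p A \<open>0 < J\<close> by (simp_all add: a_def b_def c_def)
  have "(\<integral>\<^sup>+ x. k x * g x \<partial>N) \<le> (\<integral>\<^sup>+ x. ennreal a * ennreal (k x * g x powr p) + ennreal b * ennreal (k x) \<partial>N)"
  proof (rule nn_integral_mono)
    fix x
    have "g x \<le> c * (g x powr p / (p * J) + (1 - 1 / p) / A)"
      unfolding c_def using le_powr_young_weighted[OF p A(1) \<open>0 < J\<close> nonneg(2)] .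
    then have "k x * g x \<le> a * (k x * g x powr p) + b * k x"
      using mult_left_mono[OF _ nonneg(1)] by (fastforce simp: a_def b_def algebra_simps)
    then show "ennreal (k x * g x) \<le> ennreal a * ennreal (k x * g x powr p) + ennreal b * ennreal (k x)"
      using \<open>0 \<le> a\<close> \<open>0 \<le> b\<close> nonneg(1)
      by (simp add: ennreal_leI flip: ennreal_mult' ennreal_plus)
  qed
  also have "\<dots> = ennreal a * (\<integral>\<^sup>+ x. k x * g x powr p \<partial>N) + ennreal b * (\<integral>\<^sup>+ x. k x \<partial>N)"
    by (simp add: nn_integral_add nn_integral_cmult)
  also have "\<dots> \<le> ennreal a * ennreal J + ennreal b * ennreal A"
    using A J by (intro add_mono mult_left_mono) auto
  also have "\<dots> = ennreal c"
    using \<open>0 \<le> a\<close> \<open>0 \<le> b\<close> p A \<open>0 < J\<close>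
    by (simp add: a_def b_def field_simps flip: ennreal_mult' ennreal_plus)
  finally show ?thesis
    unfolding c_def .
qed

lemma integral_mult_powr_le:
  fixes k f :: "'b \<Rightarrow> real"
  assumes [measurable]: "k \<in> borel_measurable N" "f \<in> borel_measurable N"
    and k: "\<And>x. 0 \<le> k x"
    and p: "1 \<le> p" and A: "0 < A" "(\<integral>\<^sup>+ x. k x \<partial>N) \<le> ennreal A"
    and J: "(\<integral>\<^sup>+ x. k x * \<bar>f x\<bar> powr p \<partial>N) \<le> ennreal J" "0 \<le> J"
  shows "integrable N (\<lambda>x. k x * f x)"
    and "\<bar>\<integral>x. k x * f x \<partial>N\<bar> powr p \<le> A powr (p - 1) * J"
proof -
  define c where "c = A powr (1 - 1 / p) * J powr (1 / p)"
  have norm_eq: "ennreal (norm (k x * f x)) = ennreal (k x * \<bar>f x\<bar>)" for x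
    using k[of x] by (simp add: abs_mult)
  have bound: "(\<integral>\<^sup>+ x. norm (k x * f x) \<partial>N) \<le> ennreal c"
    unfolding norm_eq c_def by (rule nn_integral_mult_le_powr) (use assms in auto)
  then show int: "integrable N (\<lambda>x. k x * f x)"
    by (intro integrableI_bounded) (auto intro: le_less_trans[OF _ ennreal_less_top])
  have "ennreal \<bar>\<integral>x. k x * f x \<partial>N\<bar> \<le> ennreal c"
    using integral_norm_bound_ennreal[OF int] bound by simp
  then have "\<bar>\<integral>x. k x * f x \<partial>N\<bar> \<le> c"
    using A J by (simp add: c_def ennreal_le_iff)
  then have "\<bar>\<integral>x. k x * f x \<partial>N\<bar> powr p \<le> c powr p"
    using p by (intro powr_mono2) auto
  also have "c powr p = A powr (p - 1) * J"
    using p A J by (simp add: c_def powr_mult powr_powr left_diff_distrib)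
  finally show "\<bar>\<integral>x. k x * f x \<partial>N\<bar> powr p \<le> A powr (p - 1) * J" .
qed

lemma integral_mult_abs_le:
  fixes k f :: "'b \<Rightarrow> real"
  assumes [measurable]: "k \<in> borel_measurable N" "f \<in> borel_measurable N"
    and k: "\<And>x. 0 \<le> k x" and A: "0 \<le> A" "(\<integral>\<^sup>+ x. k x \<partial>N) \<le> ennreal A"
    and B: "AE x in N. \<bar>f x\<bar> \<le> B" "0 \<le> B"
  shows "integrable N (\<lambda>x. k x * f x)"
    and "\<bar>\<integral>x. k x * f x \<partial>N\<bar> \<le> A * B"
proof -
  have "(\<integral>\<^sup>+ x. norm (k x * f x) \<partial>N) \<le> (\<integral>\<^sup>+ x. ennreal B * k x \<partial>N)"
  proof (rule nn_integral_mono_AE)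
    show "AE x in N. ennreal (norm (k x * f x)) \<le> ennreal B * ennreal (k x)"
      using B(1)
    proof eventually_elim
      fix x
      assume "\<bar>f x\<bar> \<le> B"
      then have "norm (k x * f x) \<le> B * k x"
        using mult_right_mono[OF _ k, of "\<bar>f x\<bar>" B] by (simp add: abs_mult k mult.commute)
      then show "ennreal (norm (k x * f x)) \<le> ennreal B * ennreal (k x)"
        using B(2) by (simp add: ennreal_leI flip: ennreal_mult')
    qed
  qed
  also have "\<dots> = ennreal B * (\<integral>\<^sup>+ x. k x \<partial>N)"
    by (simp add: nn_integral_cmult)
  also have "\<dots> \<le> ennreal (A * B)"
    using mult_left_mono[OF A(2), of "ennreal B"] A(1) B(2) by (simp add: ennreal_mult mult.commute)
  finally have bound: "(\<integral>\<^sup>+ x. norm (k x * f x) \<partial>N) \<le> ennreal (A * B)" .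
  then show int: "integrable N (\<lambda>x. k x * f x)"
    by (intro integrableI_bounded) (auto intro: le_less_trans[OF _ ennreal_less_top])
  have "ennreal \<bar>\<integral>x. k x * f x \<partial>N\<bar> \<le> ennreal (A * B)"
    using integral_norm_bound_ennreal[OF int] bound by simp
  then show "\<bar>\<integral>x. k x * f x \<partial>N\<bar> \<le> A * B"
    using A B by (simp add: ennreal_le_iff)
qed

lemma nn_integral_density_kernel_le:
  fixes K :: "'b \<Rightarrow> 'b \<Rightarrow> real" and w h :: "'b \<Rightarrow> real"
  assumes "sigma_finite_measure \<mu>"
    and [measurable]: "case_prod K \<in> borel_measurable (\<mu> \<Otimes>\<^sub>M \<mu>)"
      "w \<in> borel_measurable \<mu>" "h \<in> borel_measurable \<mu>"
    and nonneg: "\<And>x y. 0 \<le> K x y" "\<And>x. 0 \<le> w x" "\<And>y. 0 \<le> h y"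
    and column: "\<And>y. (\<integral>\<^sup>+ x. w x * K x y \<partial>\<mu>) \<le> ennreal (B * w y)" "0 \<le> B"
  shows "(\<integral>\<^sup>+ x. (\<integral>\<^sup>+ y. K x y * h y \<partial>\<mu>) \<partial>density \<mu> w) \<le> ennreal B * (\<integral>\<^sup>+ y. h y \<partial>density \<mu> w)"
proof -
  interpret pair_sigma_finite \<mu> \<mu>
    by (simp add: assms(1) pair_sigma_finite_def)
  have "(\<integral>\<^sup>+ x. (\<integral>\<^sup>+ y. K x y * h y \<partial>\<mu>) \<partial>density \<mu> w)
      = (\<integral>\<^sup>+ x. ennreal (w x) * (\<integral>\<^sup>+ y. K x y * h y \<partial>\<mu>) \<partial>\<mu>)"
    by (intro nn_integral_density) (auto intro!: borel_measurable_nn_integral)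
  also have "\<dots> = (\<integral>\<^sup>+ x. (\<integral>\<^sup>+ y. ennreal (h y) * ennreal (w x * K x y) \<partial>\<mu>) \<partial>\<mu>)"
    by (intro nn_integral_cong)
      (simp add: nonneg mult_ac flip: nn_integral_cmult ennreal_mult)
  also have "\<dots> = (\<integral>\<^sup>+ y. (\<integral>\<^sup>+ x. ennreal (h y) * ennreal (w x * K x y) \<partial>\<mu>) \<partial>\<mu>)"
    by (intro Fubini') measurable
  also have "\<dots> = (\<integral>\<^sup>+ y. ennreal (h y) * (\<integral>\<^sup>+ x. w x * K x y \<partial>\<mu>) \<partial>\<mu>)"
    by (intro nn_integral_cong nn_integral_cmult) measurable
  also have "\<dots> \<le> (\<integral>\<^sup>+ y. ennreal B * (ennreal (w y) * ennreal (h y)) \<partial>\<mu>)"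
  proof (rule nn_integral_mono)
    fix y
    have "ennreal (h y) * (\<integral>\<^sup>+ x. w x * K x y \<partial>\<mu>) \<le> ennreal (h y) * ennreal (B * w y)"
      by (intro mult_left_mono column(1)) simp
    also have "\<dots> = ennreal B * (ennreal (w y) * ennreal (h y))"
      using nonneg column(2) by (simp add: ennreal_mult mult_ac)
    finally show "ennreal (h y) * (\<integral>\<^sup>+ x. w x * K x y \<partial>\<mu>) \<le> ennreal B * (ennreal (w y) * ennreal (h y))" .
  qed
  also have "\<dots> = ennreal B * (\<integral>\<^sup>+ y. h y \<partial>density \<mu> w)"
    by (simp add: nn_integral_cmult nn_integral_density)
  finally show ?thesis .
qed

lemma Schur_test_Lp:
  fixes K :: "'b \<Rightarrow> 'b \<Rightarrow> real" and w f :: "'b \<Rightarrow> real"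
  assumes \<mu>: "sigma_finite_measure \<mu>"
    and [measurable]: "case_prod K \<in> borel_measurable (\<mu> \<Otimes>\<^sub>M \<mu>)"
      "w \<in> borel_measurable \<mu>" "f \<in> borel_measurable \<mu>"
    and nonneg: "\<And>x y. 0 \<le> K x y" "\<And>x. 0 \<le> w x"
    and row: "\<And>x. (\<integral>\<^sup>+ y. K x y \<partial>\<mu>) \<le> ennreal A" "0 < A"
    and column: "\<And>y. (\<integral>\<^sup>+ x. w x * K x y \<partial>\<mu>) \<le> ennreal (B * w y)" "0 \<le> B"
    and p: "1 \<le> p"
    and f: "(\<integral>\<^sup>+ x. \<bar>f x\<bar> powr p \<partial>density \<mu> w) < \<infinity>"
  shows "AE x in density \<mu> w. integrable \<mu> (\<lambda>y. K x y * f y)"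
    and "(\<integral>\<^sup>+ x. \<bar>\<integral>y. K x y * f y \<partial>\<mu>\<bar> powr p \<partial>density \<mu> w)
      \<le> ennreal (A powr (p - 1) * B) * (\<integral>\<^sup>+ x. \<bar>f x\<bar> powr p \<partial>density \<mu> w)"
proof -
  interpret sigma_finite_measure \<mu>
    by (rule \<mu>)
  define J where "J x = (\<integral>\<^sup>+ y. K x y * \<bar>f y\<bar> powr p \<partial>\<mu>)" for x
  have [measurable]: "J \<in> borel_measurable \<mu>"
    unfolding J_def by measurable
  have total: "(\<integral>\<^sup>+ x. J x \<partial>density \<mu> w) \<le> ennreal B * (\<integral>\<^sup>+ x. \<bar>f x\<bar> powr p \<partial>density \<mu> w)"
    unfolding J_def by (rule nn_integral_density_kernel_le) (use assms in auto)
  also have "\<dots> < \<infinity>"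
    using f by (simp add: ennreal_mult_less_top)
  finally have finite: "AE x in density \<mu> w. J x \<noteq> \<infinity>"
    by (intro nn_integral_PInf_AE) auto
  have pointwise: "integrable \<mu> (\<lambda>y. K x y * f y)
      \<and> ennreal (\<bar>\<integral>y. K x y * f y \<partial>\<mu>\<bar> powr p) \<le> ennreal (A powr (p - 1)) * J x"
    if "x \<in> space \<mu>" "J x \<noteq> \<infinity>" for x
  proof -
    have "K x \<in> borel_measurable \<mu>"
      using measurable_Pair2[OF assms(2) that(1)] by simp
    have "J x = ennreal (enn2real (J x))"
      using that(2) by (simp add: ennreal_enn2real_if)
    then have "integrable \<mu> (\<lambda>y. K x y * f y)"
      and "\<bar>\<integral>y. K x y * f y \<partial>\<mu>\<bar> powr p \<le> A powr (p - 1) * enn2real (J x)"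
      using integral_mult_powr_le[of "K x" \<mu> f p A "enn2real (J x)"] \<open>K x \<in> borel_measurable \<mu>\<close> nonneg row p
      unfolding J_def by auto
    moreover have "ennreal (A powr (p - 1) * enn2real (J x)) = ennreal (A powr (p - 1)) * J x"
      using \<open>J x = ennreal (enn2real (J x))\<close> by (metis ennreal_mult' powr_ge_zero)
    ultimately show ?thesis
      by (metis ennreal_leI)
  qed
  show "AE x in density \<mu> w. integrable \<mu> (\<lambda>y. K x y * f y)"
    using finite AE_space by eventually_elim (use pointwise in auto)
  have "AE x in density \<mu> w. ennreal (\<bar>\<integral>y. K x y * f y \<partial>\<mu>\<bar> powr p) \<le> ennreal (A powr (p - 1)) * J x"
    using finite AE_space by eventually_elim (use pointwise in auto)
  then have "(\<integral>\<^sup>+ x. \<bar>\<integral>y. K x y * f y \<partial>\<mu>\<bar> powr p \<partial>density \<mu> w)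
      \<le> (\<integral>\<^sup>+ x. ennreal (A powr (p - 1)) * J x \<partial>density \<mu> w)"
    by (rule nn_integral_mono_AE)
  also have "\<dots> = ennreal (A powr (p - 1)) * (\<integral>\<^sup>+ x. J x \<partial>density \<mu> w)"
    by (simp add: nn_integral_cmult)
  also have "\<dots> \<le> ennreal (A powr (p - 1)) * (ennreal B * (\<integral>\<^sup>+ x. \<bar>f x\<bar> powr p \<partial>density \<mu> w))"
    by (intro mult_left_mono total) simp
  finally show "(\<integral>\<^sup>+ x. \<bar>\<integral>y. K x y * f y \<partial>\<mu>\<bar> powr p \<partial>density \<mu> w)
      \<le> ennreal (A powr (p - 1) * B) * (\<integral>\<^sup>+ x. \<bar>f x\<bar> powr p \<partial>density \<mu> w)"
    using column(2) by (simp add: ennreal_mult mult.assoc)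
qed

section \<open>A radial integral\<close>

lemma ex_dyadic_interval:
  fixes x :: real
  assumes "1 \<le> x"
  obtains k :: nat where "2 ^ k \<le> x" "x < 2 ^ (k + 1)"
proof -
  define n where "n = nat \<lfloor>x\<rfloor>"
  have n: "real n \<le> x" "x < real n + 1"
    using assms unfolding n_def by linarith+
  obtain k where k: "2 ^ k \<le> n" "Suc n \<le> 2 ^ (k + 1)"
    using ex_power_ivl1[of 2 n] assms unfolding n_def by (auto simp: Suc_le_eq)
  have "(2::real) ^ k \<le> real n" "real n + 1 \<le> (2::real) ^ (k + 1)"
    using k by (metis of_nat_le_iff of_nat_numeral of_nat_power,
                metis of_nat_Suc of_nat_le_iff of_nat_numeral of_nat_power add.commute)
  then have "2 ^ k \<le> x" "x < 2 ^ (k + 1)"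
    using n by linarith+
  then show ?thesis ..
qed

lemma inverse_norm_power_le_dyadic_sum:
  fixes z :: "'a::real_normed_vector"
  assumes "r > 0" "z \<noteq> 0"
  shows "ennreal (indicator (cball 0 r) z / norm z ^ m)
     \<le> (\<Sum>k. ennreal ((2 ^ (k + 1) / r) ^ m) * indicator (cball 0 (r / 2 ^ k)) z)"
proof (cases "norm z \<le> r")
  case True
  then obtain k :: nat where k: "2 ^ k \<le> r / norm z" "r / norm z < 2 ^ (k + 1)"
    using ex_dyadic_interval[of "r / norm z"] assms by auto
  have "norm z \<le> r / 2 ^ k"
    using k assms by (simp add: field_simps)
  have "1 / norm z \<le> 2 ^ (k + 1) / r"
    using k assms by (simp add: field_simps)
  then have "(1 / norm z) ^ m \<le> (2 ^ (k + 1) / r) ^ m"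
    by (intro power_mono) simp_all
  then have "ennreal (indicator (cball 0 r) z / norm z ^ m)
      \<le> ennreal ((2 ^ (k + 1) / r) ^ m) * indicator (cball 0 (r / 2 ^ k)) z"
    using True \<open>norm z \<le> r / 2 ^ k\<close> by (simp add: indicator_def power_one_over ennreal_leI)
  also have "\<dots> \<le> (\<Sum>k. ennreal ((2 ^ (k + 1) / r) ^ m) * indicator (cball 0 (r / 2 ^ k)) z)"
    by (rule sum_le_suminf[where I="{k}", simplified]) (auto intro: summableI)
  finally show ?thesis .
qed (simp add: indicator_def)

lemma nn_integral_cball_inverse_norm_power_le:
  fixes r :: real
  assumes "r > 0" and d: "DIM('a::euclidean_space) = Suc m"
  shows "(\<integral>\<^sup>+ z. ennreal (indicator (cball (0::'a) r) z / norm z ^ m) \<partial>lborel)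
     \<le> ennreal (2 ^ DIM('a) * unit_ball_vol DIM('a) * r)"
proof -
  define \<omega> where "\<omega> = unit_ball_vol DIM('a)"
  have "(\<integral>\<^sup>+ z. ennreal (indicator (cball (0::'a) r) z / norm z ^ m) \<partial>lborel)
     \<le> (\<integral>\<^sup>+ z. (\<Sum>k. ennreal ((2 ^ (k + 1) / r) ^ m) * indicator (cball (0::'a) (r / 2 ^ k)) z) \<partial>lborel)"
    using AE_lborel_singleton[of "0::'a"] inverse_norm_power_le_dyadic_sum[OF assms(1)]
    by (intro nn_integral_mono_AE) (auto elim!: eventually_mono)
  also have "\<dots> = (\<Sum>k. ennreal ((2 ^ (k + 1) / r) ^ m) * emeasure lborel (cball (0::'a) (r / 2 ^ k)))"
    by (subst nn_integral_suminf) (auto intro!: suminf_cong nn_integral_cmult_indicator borel_measurable_times_ennreal borel_measurable_indicator)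
  also have "\<dots> = (\<Sum>k. ennreal (2 ^ m * \<omega> * r * (1 / 2) ^ k))"
  proof (intro suminf_cong)
    fix k :: nat
    have "(2 ^ (k + 1) / r) * (r / 2 ^ k) = 2"
      using assms by simp
    then have "(2 ^ (k + 1) / r) ^ m * (r / 2 ^ k) ^ m = 2 ^ m"
      by (metis power_mult_distrib)
    then have "(2 ^ (k + 1) / r) ^ m * (\<omega> * (r / 2 ^ k) ^ DIM('a)) = 2 ^ m * (\<omega> * (r / 2 ^ k))"
      unfolding d power_Suc by (simp only: mult_ac)
    also have "\<dots> = 2 ^ m * \<omega> * r * (1 / 2) ^ k"
      by (simp add: power_one_over)
    finally have "(2 ^ (k + 1) / r) ^ m * (\<omega> * (r / 2 ^ k) ^ DIM('a)) = 2 ^ m * \<omega> * r * (1 / 2) ^ k" .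
    then show "ennreal ((2 ^ (k + 1) / r) ^ m) * emeasure lborel (cball (0::'a) (r / 2 ^ k))
        = ennreal (2 ^ m * \<omega> * r * (1 / 2) ^ k)"
      using assms by (simp add: emeasure_cball \<omega>_def flip: ennreal_mult)
  qed
  also have "\<dots> = ennreal (2 ^ m * \<omega> * r * 2)"
    using assms sums_mult[OF geometric_sums[of "1 / 2 :: real"], of "2 ^ m * \<omega> * r"]
    by (intro suminf_ennreal_eq) (auto simp: \<omega>_def)
  finally show ?thesis
    unfolding \<omega>_def by (simp add: d mult_ac)
qed

section \<open>The local region\<close>

lemma closed_local_region: "closed (local_region \<sigma> :: ('a::euclidean_space \<times> 'a) set)"
proof -
  have "local_region \<sigma> = {p :: 'a \<times> 'a. norm (fst p - snd p) \<le> \<sigma>}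
      \<inter> {p. norm (fst p - snd p) * norm (fst p + snd p) \<le> \<sigma>}"
    by (auto simp: local_region_def)
  then show ?thesis
    by (auto intro!: closed_Collect_le closed_Int continuous_intros)
qed

lemma local_region_commute: "(x, y) \<in> local_region \<sigma> \<longleftrightarrow> (y, x) \<in> local_region \<sigma>"
  by (auto simp: local_region_def norm_minus_commute add.commute)

lemma local_region_norm_diff_le:
  assumes "(x, y) \<in> local_region \<sigma>" "\<sigma> < norm x"
  shows "norm (y - x) \<le> \<sigma> / norm x"
proof -
  have "norm (x - y) \<le> \<sigma>" "norm (x - y) * norm (x + y) \<le> \<sigma>"
    using assms(1) by (auto simp: local_region_def)
  moreover have "norm x \<le> norm (x + y)"
  proof -
    have "norm (2 *\<^sub>R x) - norm (x - y) \<le> norm (x + y)"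
      using norm_triangle_ineq2[of "2 *\<^sub>R x" "x - y"] by (simp add: scaleR_2 algebra_simps)
    then show ?thesis using \<open>norm (x - y) \<le> \<sigma>\<close> assms(2) by simp
  qed
  ultimately have "norm (x - y) * norm x \<le> \<sigma>"
    by (meson mult_left_mono norm_ge_zero order_trans)
  moreover have "0 < norm x"
    using assms(2) \<open>norm (x - y) \<le> \<sigma>\<close> norm_ge_zero[of "x - y"] by linarith
  ultimately show ?thesis
    by (simp add: pos_le_divide_eq norm_minus_commute)
qed

lemma exp_neg_norm_power2_le_local:
  fixes x y :: "'a::euclidean_space"
  assumes "(x, y) \<in> local_region \<sigma>"
  shows "exp (- (norm x)\<^sup>2) \<le> exp \<sigma> * exp (- (norm y)\<^sup>2)"
proof -
  have "(norm y)\<^sup>2 - (norm x)\<^sup>2 = inner (y - x) (y + x)"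
    by (simp add: power2_norm_eq_inner algebra_simps inner_commute)
  also have "\<dots> \<le> norm (x - y) * norm (x + y)"
    using norm_cauchy_schwarz[of "y - x" "y + x"] by (simp add: norm_minus_commute add.commute)
  also have "\<dots> \<le> \<sigma>"
    using assms by (simp add: local_region_def)
  finally show ?thesis
    by (simp flip: exp_add)
qed

section \<open>The operator S\<close>

lemma S_kernel_measurable [measurable]:
  "case_prod (S_kernel \<sigma>) \<in> borel_measurable (lborel \<Otimes>\<^sub>M (lborel :: 'a::euclidean_space measure))"
proof -
  have [measurable]: "local_region \<sigma> \<in> sets (lborel \<Otimes>\<^sub>M (lborel :: 'a measure))"
    by (metis borel_closed closed_local_region lborel_prod sets_lborel)
  show ?thesis
    unfolding S_kernel_def case_prod_beta' by measurable
qed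

lemma S_kernel_nonneg: "0 \<le> S_kernel \<sigma> x y"
  by (simp add: S_kernel_def)

lemma S_kernel_commute_le:
  assumes "\<sigma> > 0"
  shows "S_kernel \<sigma> x y \<le> (1 + \<sigma>) * S_kernel \<sigma> y x"
proof (cases "(x, y) \<in> local_region \<sigma>")
  case True
  then have "norm (x - y) \<le> \<sigma>" by (simp add: local_region_def)
  then have "1 + norm x \<le> (1 + norm y) + \<sigma> * 1"
    using norm_triangle_ineq2[of x y] by simp
  also have "\<dots> \<le> (1 + norm y) + \<sigma> * (1 + norm y)"
    using assms by (intro add_left_mono mult_left_mono) auto
  finally have "1 + norm x \<le> (1 + \<sigma>) * (1 + norm y)"
    by (simp add: algebra_simps)
  then show ?thesis using True local_region_commute[of x y]
    by (simp add: S_kernel_def norm_minus_commute divide_right_mono)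
qed (simp add: S_kernel_def local_region_commute)

lemma S_kernel_translate_le:
  fixes x z :: "'a::euclidean_space"
  assumes "\<sigma> > 0"
  shows "S_kernel \<sigma> x (x + z)
    \<le> (1 + norm x) * (indicator (cball 0 (if norm x \<le> \<sigma> then \<sigma> else \<sigma> / norm x)) z
          / norm z ^ (DIM('a) - 1))"
proof (cases "(x, x + z) \<in> local_region \<sigma>")
  case True
  then have "norm z \<le> \<sigma>"
    by (simp add: local_region_def)
  moreover have "norm z \<le> \<sigma> / norm x" if "\<sigma> < norm x"
    using local_region_norm_diff_le[OF True that] by simp
  ultimately show ?thesis
    using True by (simp add: S_kernel_def)
qed (simp add: S_kernel_def)

lemma nn_integral_S_kernel_row_le:
  fixes x :: "'a::euclidean_space"
  assumes "\<sigma> > 0"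
  shows "(\<integral>\<^sup>+ y. S_kernel \<sigma> x y \<partial>lborel) \<le> ennreal (2 ^ DIM('a) * unit_ball_vol DIM('a) * (1 + \<sigma>)\<^sup>2)"
proof -
  define \<rho> where "\<rho> = (if norm x \<le> \<sigma> then \<sigma> else \<sigma> / norm x)"
  define c where "c = 2 ^ DIM('a) * unit_ball_vol DIM('a)"
  have "\<rho> > 0"
    using assms by (auto simp: \<rho>_def intro!: divide_pos_pos)
  have "(1 + norm x) * \<rho> \<le> (1 + \<sigma>)\<^sup>2"
  proof (cases "norm x \<le> \<sigma>")
    case True
    then have "(1 + norm x) * \<sigma> \<le> (1 + \<sigma>) * (1 + \<sigma>)"
      using assms by (intro mult_mono) auto
    then show ?thesis
      using True by (simp add: \<rho>_def power2_eq_square)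
  next
    case False
    then have "0 < norm x"
      using assms by linarith
    with False have "(1 + norm x) * \<rho> = \<sigma> / norm x + \<sigma>" and "\<sigma> / norm x \<le> 1"
      by (simp_all add: \<rho>_def field_simps)
    moreover have "1 + \<sigma> \<le> (1 + \<sigma>)\<^sup>2"
      using assms by (simp add: power2_eq_square)
    ultimately show ?thesis
      by linarith
  qed
  obtain m where d: "DIM('a) = Suc m"
    using DIM_positive not0_implies_Suc by blast
  have "(\<integral>\<^sup>+ y. S_kernel \<sigma> x y \<partial>lborel) = (\<integral>\<^sup>+ z. S_kernel \<sigma> x (x + z) \<partial>lborel)"
    by (subst lborel_distr_plus[of x, symmetric]) (simp add: nn_integral_distr)
  also have "\<dots> \<le> (\<integral>\<^sup>+ z. ennreal (1 + norm x) * ennreal (indicator (cball (0::'a) \<rho>) z / norm z ^ m) \<partial>lborel)"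
  proof (rule nn_integral_mono)
    fix z :: 'a
    have "S_kernel \<sigma> x (x + z) \<le> (1 + norm x) * (indicator (cball 0 \<rho>) z / norm z ^ m)"
      using S_kernel_translate_le[OF assms, of x z] by (simp add: \<rho>_def d)
    then show "ennreal (S_kernel \<sigma> x (x + z))
        \<le> ennreal (1 + norm x) * ennreal (indicator (cball 0 \<rho>) z / norm z ^ m)"
      by (subst ennreal_mult'[symmetric]) (auto intro: ennreal_leI)
  qed
  also have "\<dots> = ennreal (1 + norm x) * (\<integral>\<^sup>+ z. ennreal (indicator (cball (0::'a) \<rho>) z / norm z ^ m) \<partial>lborel)"
    by (intro nn_integral_cmult) (simp add: borel_measurable_indicator borel_measurable_divide)
  also have "\<dots> \<le> ennreal (1 + norm x) * ennreal (c * \<rho>)"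
    using nn_integral_cball_inverse_norm_power_le[OF \<open>\<rho> > 0\<close> d] by (intro mult_left_mono) (simp_all add: c_def)
  also have "\<dots> = ennreal (c * ((1 + norm x) * \<rho>))"
    by (subst ennreal_mult'[symmetric]) (simp_all add: mult.left_commute)
  also have "\<dots> \<le> ennreal (c * (1 + \<sigma>)\<^sup>2)"
    using \<open>(1 + norm x) * \<rho> \<le> (1 + \<sigma>)\<^sup>2\<close> by (intro ennreal_leI mult_left_mono) (simp_all add: c_def)
  finally show ?thesis
    by (simp add: c_def)
qed

lemma nn_integral_S_kernel_column_le:
  fixes y :: "'a::euclidean_space"
  assumes "\<sigma> > 0"
  shows "(\<integral>\<^sup>+ x. S_kernel \<sigma> x y \<partial>lborel) \<le> ennreal (2 ^ DIM('a) * unit_ball_vol DIM('a) * (1 + \<sigma>) ^ 3)"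
proof -
  have "(\<integral>\<^sup>+ x. S_kernel \<sigma> x y \<partial>lborel) \<le> (\<integral>\<^sup>+ x. ennreal (1 + \<sigma>) * S_kernel \<sigma> y x \<partial>lborel)"
    using S_kernel_commute_le[OF assms] assms
    by (intro nn_integral_mono, subst ennreal_mult'[symmetric]) (auto intro: ennreal_leI)
  also have "\<dots> = ennreal (1 + \<sigma>) * (\<integral>\<^sup>+ x. S_kernel \<sigma> y x \<partial>lborel)"
    by (intro nn_integral_cmult) simp
  also have "\<dots> \<le> ennreal (1 + \<sigma>) * ennreal (2 ^ DIM('a) * unit_ball_vol DIM('a) * (1 + \<sigma>)\<^sup>2)"
    by (intro mult_left_mono nn_integral_S_kernel_row_le assms) simp
  also have "\<dots> = ennreal (2 ^ DIM('a) * unit_ball_vol DIM('a) * (1 + \<sigma>) ^ 3)"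
    using assms by (subst ennreal_mult'[symmetric]) (simp_all add: power3_eq_cube power2_eq_square mult_ac)
  finally show ?thesis .
qed

lemma borel_measurable_S_op:
  assumes [measurable]: "f \<in> borel_measurable lborel"
  shows "S_op \<sigma> f \<in> borel_measurable (lborel :: 'a::euclidean_space measure)"
proof -
  have "(\<lambda>(x, y). S_kernel \<sigma> x y * f y) \<in> borel_measurable (lborel \<Otimes>\<^sub>M (lborel :: 'a measure))"
    by measurable
  then show ?thesis
    unfolding S_op_def by (intro lborel.borel_measurable_lebesgue_integral) simp
qed

lemma S_bounded_Lp_density:
  fixes w :: "'a::euclidean_space \<Rightarrow> real"
  assumes "\<sigma> > 0" and [measurable]: "w \<in> borel_measurable lborel" and "\<And>x. 0 \<le> w x"
    and comparable: "\<And>x y. (x, y) \<in> local_region \<sigma> \<Longrightarrow> w x \<le> c * w y" "0 \<le> c"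
    and "1 \<le> p"
  shows "S_bounded_Lp (density lborel w) p \<sigma>"
proof -
  define V where "V = 2 ^ DIM('a) * unit_ball_vol DIM('a)"
  define A B where "A = V * (1 + \<sigma>)\<^sup>2" and "B = c * (V * (1 + \<sigma>) ^ 3)"
  have "0 < A" "0 \<le> B"
    using \<open>\<sigma> > 0\<close> \<open>0 \<le> c\<close> by (simp_all add: A_def B_def V_def)
  have column: "(\<integral>\<^sup>+ x. w x * S_kernel \<sigma> x y \<partial>lborel) \<le> ennreal (B * w y)" for y
  proof -
    have "w x * S_kernel \<sigma> x y \<le> c * w y * S_kernel \<sigma> x y" for x
    proof (cases "(x, y) \<in> local_region \<sigma>")
      case True
      then show ?thesis
        using mult_right_mono[OF comparable(1)[OF True] S_kernel_nonneg] by blast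
    qed (simp add: S_kernel_def)
    then have "(\<integral>\<^sup>+ x. w x * S_kernel \<sigma> x y \<partial>lborel) \<le> (\<integral>\<^sup>+ x. ennreal (c * w y) * S_kernel \<sigma> x y \<partial>lborel)"
      using comparable(2) \<open>0 \<le> w y\<close>
      by (intro nn_integral_mono, subst ennreal_mult'[symmetric]) (auto intro: ennreal_leI)
    also have "\<dots> = ennreal (c * w y) * (\<integral>\<^sup>+ x. S_kernel \<sigma> x y \<partial>lborel)"
      by (intro nn_integral_cmult) measurable
    also have "\<dots> \<le> ennreal (c * w y) * ennreal (V * (1 + \<sigma>) ^ 3)"
      unfolding V_def by (intro mult_left_mono nn_integral_S_kernel_column_le \<open>\<sigma> > 0\<close>) simp
    finally show ?thesis
      using comparable(2) \<open>0 \<le> w y\<close> \<open>\<sigma> > 0\<close>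
      by (simp add: B_def V_def mult_ac flip: ennreal_mult)
  qed
  have row: "(\<integral>\<^sup>+ y. S_kernel \<sigma> x y \<partial>lborel) \<le> ennreal A" for x :: 'a
    unfolding A_def V_def by (rule nn_integral_S_kernel_row_le[OF \<open>\<sigma> > 0\<close>])
  show ?thesis
    unfolding S_bounded_Lp_def S_op_def
  proof (intro exI[of _ "A powr (p - 1) * B"] conjI ballI impI)
    fix f :: "'a \<Rightarrow> real"
    assume "f \<in> borel_measurable (density lborel w)"
      and "(\<integral>\<^sup>+ x. \<bar>f x\<bar> powr p \<partial>density lborel w) < \<infinity>"
    then show "AE x in density lborel w. integrable lborel (\<lambda>y. S_kernel \<sigma> x y * f y)"
      and "(\<integral>\<^sup>+ x. \<bar>\<integral>y. S_kernel \<sigma> x y * f y \<partial>lborel\<bar> powr p \<partial>density lborel w)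
        \<le> ennreal (A powr (p - 1) * B) * (\<integral>\<^sup>+ x. \<bar>f x\<bar> powr p \<partial>density lborel w)"
      using Schur_test_Lp[of lborel "S_kernel \<sigma>" w f A B p] assms row column \<open>0 < A\<close> \<open>0 \<le> B\<close>
      by (auto simp: S_kernel_nonneg lborel.sigma_finite_measure_axioms)
    show "(\<lambda>x. \<integral>y. S_kernel \<sigma> x y * f y \<partial>lborel) \<in> borel_measurable (density lborel w)"
      using borel_measurable_S_op[of f \<sigma>] \<open>f \<in> borel_measurable (density lborel w)\<close>
      by (simp add: S_op_def)
  qed (use \<open>0 < A\<close> \<open>0 \<le> B\<close> in simp)
qed

lemma S_bounded_Linf_density:
  fixes w :: "'a::euclidean_space \<Rightarrow> real"
  assumes "\<sigma> > 0" and [measurable]: "w \<in> borel_measurable lborel" and "\<And>x. 0 < w x"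
  shows "S_bounded_Linf (density lborel w) \<sigma>"
proof -
  define A where "A = 2 ^ DIM('a) * unit_ball_vol DIM('a) * (1 + \<sigma>)\<^sup>2"
  have "0 \<le> A"
    by (simp add: A_def)
  show ?thesis
    unfolding S_bounded_Linf_def
  proof (intro exI[of _ A] conjI ballI allI impI)
    fix f :: "'a \<Rightarrow> real" and B :: real
    assume "f \<in> borel_measurable (density lborel w)"
    then have [measurable]: "f \<in> borel_measurable lborel"
      by simp
    assume "AE x in density lborel w. \<bar>f x\<bar> \<le> B"
    then have bounded: "AE x in lborel. \<bar>f x\<bar> \<le> B"
      using assms by (simp add: AE_density less_imp_le)
    have "0 \<le> B"
    proof (rule ccontr)
      assume "\<not> 0 \<le> B"
      with bounded have "AE x in (lborel :: 'a measure). False"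
        by (auto elim: eventually_mono)
      then show False
        using ae_filter_eq_bot_iff[of "lborel :: 'a measure"] trivial_limit_def by simp
    qed
    have "integrable lborel (\<lambda>y. S_kernel \<sigma> x y * f y) \<and> \<bar>S_op \<sigma> f x\<bar> \<le> A * B" for x :: 'a
      unfolding S_op_def A_def using nn_integral_S_kernel_row_le[OF assms(1), of x] bounded \<open>0 \<le> B\<close>
      by (intro conjI integral_mult_abs_le) (auto simp: S_kernel_nonneg)
    then show "AE x in density lborel w. integrable lborel (\<lambda>y. S_kernel \<sigma> x y * f y)"
      and "AE x in density lborel w. \<bar>S_op \<sigma> f x\<bar> \<le> A * B"
      by simp_all
    show "S_op \<sigma> f \<in> borel_measurable (density lborel w)"
      using borel_measurable_S_op[of f \<sigma>] by simp
  qed (rule \<open>0 \<le> A\<close>)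
qed

theorem lemma2p5:
  fixes \<sigma> :: real
  assumes "\<sigma> > 0"
  shows "(\<forall>p::real. 1 \<le> p \<longrightarrow>
            S_bounded_Lp (lborel :: 'a::euclidean_space measure) p \<sigma> \<and>
            S_bounded_Lp (gauss_measure :: 'a measure) p \<sigma>) \<and>
         S_bounded_Linf (lborel :: 'a measure) \<sigma> \<and>
         S_bounded_Linf (gauss_measure :: 'a measure) \<sigma>"
proof -
  define g :: "'a \<Rightarrow> real" where "g x = pi powr (- real DIM('a) / 2) * exp (- (norm x)\<^sup>2)" for x
  have gauss: "gauss_measure = density lborel g"
    by (simp add: gauss_measure_def g_def)
  have lebesgue: "(lborel :: 'a measure) = density lborel (\<lambda>_. ennreal 1)"
    by (simp add: density_1)
  have [measurable]: "g \<in> borel_measurable lborel"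
    unfolding g_def by measurable
  have g_local: "g x \<le> exp \<sigma> * g y" if "(x, y) \<in> local_region \<sigma>" for x y
    unfolding g_def using exp_neg_norm_power2_le_local[OF that]
    by (simp add: mult.left_commute[of "exp \<sigma>"])
  have "S_bounded_Lp (lborel :: 'a measure) p \<sigma>" if "1 \<le> p" for p
    by (subst lebesgue, rule S_bounded_Lp_density[OF assms _ _ _ _ that, where c = 1]) auto
  moreover have "S_bounded_Lp (density lborel g) p \<sigma>" if "1 \<le> p" for p
    by (rule S_bounded_Lp_density[OF assms _ _ g_local _ that]) (auto simp: g_def)
  moreover have "S_bounded_Linf (lborel :: 'a measure) \<sigma>"
    by (subst lebesgue, rule S_bounded_Linf_density[OF assms]) auto
  moreover have "S_bounded_Linf (density lborel g) \<sigma>"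
    by (rule S_bounded_Linf_density[OF assms]) (auto simp: g_def)
  ultimately show ?thesis
    unfolding gauss by blast
qed

end
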